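(* Let $d\geq 3$ and $k\geq 1$, and let $P_{d,k}(t)=\sum_{n\geq 1}p_{d,k,n}t^n$, where $p_{d,k,n}$ is the number of directed plateau polyhypercubes of dimension $d$, width $k$ and lateral area $n$. Then $$P_{d,k}(t)=\frac{t^{k(d-1)}}{(1-t)^{2k(d-1)-(d-1)}}.$$
   Context: Work in $\mathbb{Z}^d$ with orthonormal coordinate system $(0,\vec{i_1},\dots,\vec{i_d})$; a cell is a unit hypercube of the lattice. A polyhypercube of dimension $d$ is a finite union of cells, connected through their $(d-1)$-dimensional faces, defined up to translation. Its width is the number of distinct values of the $\vec{i_1}$-coordinate taken by its cells; its strata are its intersections with the layers of constant $\vec{i_1}$-coordinate. A plateau is a stratum that is a hyperrectangle. An elementary step is a positive move of one unit along one axis. A polyhypercube is directed if every cell can be reached from a distinguished root cell by a path of cells of the polyhypercube using only elementary steps. A directed plateau polyhypercube is a directed polyhypercube all of whose strata are plateaus. The lateral area of a polyhypercube is the sum, over $2\leq l\leq d$, of the areas (numbers of unit squares) of the polyominoes obtained by projecting it onto the planes $(\vec{i_1},\vec{i_l})$. Generating functions are formal power series in $t$. *)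

theory Defs
  imports Main "HOL-Computational_Algebra.Formal_Power_Series"
begin

text \<open>Cells of the d-dimensional lattice: a cell is identified with its minimal
corner, a point of Z^d, represented as a function nat => int vanishing at
indices >= d. Coordinate 0 is the i_1 axis; coordinates 1..d-1 are i_2..i_d.\<close>

definition cells :: "nat \<Rightarrow> (nat \<Rightarrow> int) set" where
  "cells d = {x. \<forall>i\<ge>d. x i = 0}"

definition unitv :: "nat \<Rightarrow> nat \<Rightarrow> int" where
  "unitv j = (\<lambda>i. if i = j then 1 else 0)"

definition adjacent :: "nat \<Rightarrow> (nat \<Rightarrow> int) \<Rightarrow> (nat \<Rightarrow> int) \<Rightarrow> bool" where
  "adjacent d x y \<longleftrightarrow> (\<exists>j<d. y = (\<lambda>i. x i + unitv j i) \<or> x = (\<lambda>i. y i + unitv j i))"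

definition elem_step :: "nat \<Rightarrow> (nat \<Rightarrow> int) \<Rightarrow> (nat \<Rightarrow> int) \<Rightarrow> bool" where
  "elem_step d x y \<longleftrightarrow> (\<exists>j<d. y = (\<lambda>i. x i + unitv j i))"

definition polyhypercube :: "nat \<Rightarrow> (nat \<Rightarrow> int) set \<Rightarrow> bool" where
  "polyhypercube d A \<longleftrightarrow> finite A \<and> A \<noteq> {} \<and> A \<subseteq> cells d \<and>
     (\<forall>x\<in>A. \<forall>y\<in>A. (\<lambda>u v. u \<in> A \<and> v \<in> A \<and> adjacent d u v)\<^sup>*\<^sup>* x y)"

definition directed :: "nat \<Rightarrow> (nat \<Rightarrow> int) set \<Rightarrow> bool" where
  "directed d A \<longleftrightarrow> (\<exists>r\<in>A. \<forall>c\<in>A. (\<lambda>u v. u \<in> A \<and> v \<in> A \<and> elem_step d u v)\<^sup>*\<^sup>* r c)"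

definition width :: "(nat \<Rightarrow> int) set \<Rightarrow> nat" where
  "width A = card ((\<lambda>x. x 0) ` A)"

definition stratum :: "(nat \<Rightarrow> int) set \<Rightarrow> int \<Rightarrow> (nat \<Rightarrow> int) set" where
  "stratum A a = {x\<in>A. x 0 = a}"

definition plateau :: "nat \<Rightarrow> int \<Rightarrow> (nat \<Rightarrow> int) set \<Rightarrow> bool" where
  "plateau d a S \<longleftrightarrow> (\<exists>lo hi :: nat \<Rightarrow> int.
      S = {x\<in>cells d. x 0 = a \<and> (\<forall>i\<in>{1..<d}. lo i \<le> x i \<and> x i \<le> hi i)})"

definition directed_plateau :: "nat \<Rightarrow> (nat \<Rightarrow> int) set \<Rightarrow> bool" where
  "directed_plateau d A \<longleftrightarrow> polyhypercube d A \<and> directed d A \<and>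
     (\<forall>a\<in>(\<lambda>x. x 0) ` A. plateau d a (stratum A a))"

text \<open>Lateral area: sum over l = 2..d (indices 1..d-1 here) of the area of the
projection onto the plane (i_1, i_l).\<close>
definition lateral_area :: "nat \<Rightarrow> (nat \<Rightarrow> int) set \<Rightarrow> nat" where
  "lateral_area d A = (\<Sum>l\<in>{1..<d}. card ((\<lambda>x. (x 0, x l)) ` A))"

definition transl_rel :: "nat \<Rightarrow> ((nat \<Rightarrow> int) set \<times> (nat \<Rightarrow> int) set) set" where
  "transl_rel d = {(A, B). \<exists>v\<in>cells d. B = (\<lambda>x i. x i + v i) ` A}"

definition p_count :: "nat \<Rightarrow> nat \<Rightarrow> nat \<Rightarrow> nat" where
  "p_count d k n = card ({A. directed_plateau d A \<and> width A = k \<and> lateral_area d A = n}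
                          // transl_rel d)"

definition P_gf :: "nat \<Rightarrow> nat \<Rightarrow> rat fps" where
  "P_gf d k = Abs_fps (\<lambda>n. if n = 0 then 0 else of_nat (p_count d k n))"

end

theory Submission
  imports Defs "HOL-Library.Multiset"
begin

text \<open>Directedness makes the root the coordinatewise minimum, so every translation class
contains exactly one polyhypercube whose root is the origin. Such a normalised directed plateau
polyhypercube of width k is a stack of boxes [lo_j, hi_j] in the layers x_0 = j < k, and
directedness amounts to lo_0 = 0 and lo_j <= lo_(j+1) <= hi_j coordinatewise: the lowest cell of
each stratum must rest on the stratum below. The (2k-1)(d-1) free non-negative differences
lo_(j+1) - lo_j, hi_j - lo_(j+1) and hi_(k-1) - lo_(k-1) form a multiset over as many slots, and
the lateral area, the sum of hi_(j,l) - lo_(j,l) + 1, is k(d-1) plus the size of that multiset.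
Counting multisets of size n - k(d-1) gives the coefficients of t^(k(d-1)) / (1-t)^((2k-1)(d-1)).\<close>

unbundle fps_syntax

type_synonym cell = "nat \<Rightarrow> int"
type_synonym layer_bounds = "nat \<Rightarrow> nat \<Rightarrow> int"

abbreviation reachable_in :: "nat \<Rightarrow> cell set \<Rightarrow> cell \<Rightarrow> cell \<Rightarrow> bool" where
  "reachable_in d A \<equiv> (\<lambda>u v. u \<in> A \<and> v \<in> A \<and> elem_step d u v)\<^sup>*\<^sup>*"

definition shift :: "cell \<Rightarrow> cell \<Rightarrow> cell" where
  "shift v x = (\<lambda>i. x i + v i)"

lemma shift_apply [simp]: "shift v x i = x i + v i"
  by (simp add: shift_def)

lemma shift_shift [simp]: "shift v (shift w x) = shift (shift v w) x"
  by (simp add: shift_def fun_eq_iff)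

lemma shift_uminus_self [simp]: "shift (- v) v = (\<lambda>_. 0)" "shift v (- v) = (\<lambda>_. 0)"
  by (simp_all add: shift_def fun_eq_iff)

lemma shift_zero [simp]: "shift (\<lambda>_. 0) x = x"
  by (simp add: shift_def)

lemma shift_in_cells: "v \<in> cells d \<Longrightarrow> x \<in> cells d \<Longrightarrow> shift v x \<in> cells d"
  by (simp add: cells_def)

lemma uminus_in_cells: "v \<in> cells d \<Longrightarrow> - v \<in> cells d"
  by (simp add: cells_def)

lemma zero_in_cells: "(\<lambda>_. 0) \<in> cells d"
  by (simp add: cells_def)

lemma transl_rel_eq: "transl_rel d = {(A, B). \<exists>v\<in>cells d. B = shift v ` A}"
  by (simp add: transl_rel_def shift_def[abs_def])

lemma equiv_transl_rel: "equiv UNIV (transl_rel d)"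
proof (rule equivI)
  show "refl (transl_rel d)"
    by (rule refl_onI) (auto simp: transl_rel_eq intro!: bexI[of _ "\<lambda>_. 0"] zero_in_cells)
  show "sym (transl_rel d)"
  proof (rule symI)
    fix A B assume "(A, B) \<in> transl_rel d"
    then obtain v where "v \<in> cells d" "B = shift v ` A"
      by (auto simp: transl_rel_eq)
    then show "(B, A) \<in> transl_rel d"
      by (auto simp: transl_rel_eq image_image intro!: bexI[of _ "- v"] uminus_in_cells)
  qed
  show "trans (transl_rel d)"
  proof (rule transI)
    fix A B C assume "(A, B) \<in> transl_rel d" "(B, C) \<in> transl_rel d"
    then obtain v w where "v \<in> cells d" "w \<in> cells d" "C = shift w ` shift v ` A"
      by (auto simp: transl_rel_eq)
    then show "(A, C) \<in> transl_rel d"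
      by (auto simp: transl_rel_eq image_image intro!: bexI[of _ "shift w v"] shift_in_cells)
  qed
qed auto

lemma rtranclp_restrict_image:
  assumes "(\<lambda>u v. u \<in> A \<and> v \<in> A \<and> R u v)\<^sup>*\<^sup>* x y"
    and "\<And>u v. R u v \<Longrightarrow> S (f u) (f v)"
  shows "(\<lambda>u v. u \<in> f ` A \<and> v \<in> f ` A \<and> S u v)\<^sup>*\<^sup>* (f x) (f y)"
  using assms(1) by induction (auto intro: rtranclp.rtrancl_into_rtrancl assms(2))

lemma elem_step_shift: "elem_step d x y \<Longrightarrow> elem_step d (shift v x) (shift v y)"
  unfolding elem_step_def shift_def by (auto simp: fun_eq_iff algebra_simps)

lemma directed_shift:
  assumes "directed d A"
  shows "directed d (shift v ` A)"
proof -
  obtain r where r: "r \<in> A" "\<forall>c\<in>A. reachable_in d A r c"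
    using assms by (auto simp: directed_def)
  have "reachable_in d (shift v ` A) (shift v r) (shift v c)" if "c \<in> A" for c
    using rtranclp_restrict_image[where R = "elem_step d" and S = "elem_step d" and f = "shift v",
        OF r(2)[rule_format, OF that] elem_step_shift] .
  then show ?thesis
    unfolding directed_def using r(1) by blast
qed

lemma elem_step_imp_adjacent: "elem_step d x y \<Longrightarrow> adjacent d x y"
  unfolding elem_step_def adjacent_def by blast

lemma adjacent_sym: "adjacent d x y \<Longrightarrow> adjacent d y x"
  unfolding adjacent_def by blast

lemma directed_imp_connected:
  assumes "directed d A" "x \<in> A" "y \<in> A"
  shows "(\<lambda>u v. u \<in> A \<and> v \<in> A \<and> adjacent d u v)\<^sup>*\<^sup>* x y"
proof -
  let ?R = "\<lambda>u v. u \<in> A \<and> v \<in> A \<and> adjacent d u v"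
  obtain r where root: "\<forall>c\<in>A. reachable_in d A r c"
    using assms(1) by (auto simp: directed_def)
  have "(\<lambda>u v. u \<in> A \<and> v \<in> A \<and> elem_step d u v) \<le> ?R"
    using elem_step_imp_adjacent by blast
  then have from_root: "?R\<^sup>*\<^sup>* r c" if "c \<in> A" for c
    using rtranclp_mono root that by blast
  have "?R\<inverse>\<inverse> = ?R"
    using adjacent_sym by blast
  then have "?R\<^sup>*\<^sup>* x r"
    using rtranclp_converseI[OF from_root[OF assms(2)]] by simp
  then show ?thesis
    using from_root[OF assms(3)] by (rule rtranclp_trans)
qed

definition box :: "nat \<Rightarrow> int \<Rightarrow> cell \<Rightarrow> cell \<Rightarrow> cell set" where
  "box d a lo hi = {x\<in>cells d. x 0 = a \<and> (\<forall>l\<in>{1..<d}. lo l \<le> x l \<and> x l \<le> hi l)}"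

lemma plateau_iff_box: "plateau d a S \<longleftrightarrow> (\<exists>lo hi. S = box d a lo hi)"
  by (simp add: plateau_def box_def)

lemma stratum_shift: "stratum (shift v ` A) (a + v 0) = shift v ` stratum A a"
  by (auto simp: stratum_def)

lemma card_projection_shift:
  "card ((\<lambda>x. (x 0, x l)) ` shift v ` A) = card ((\<lambda>x. (x 0, x l)) ` A)"
proof -
  have "(\<lambda>x. (x 0, x l)) ` shift v ` A = (\<lambda>(a, b). (a + v 0, b + v l)) ` (\<lambda>x. (x 0, x l)) ` A"
    by (auto simp: image_image)
  moreover have "card ((\<lambda>(a, b). (a + v 0, b + v l)) ` (\<lambda>x. (x 0, x l)) ` A) = card ((\<lambda>x. (x 0, x l)) ` A)"
    by (rule card_image) (auto simp: inj_on_def)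
  ultimately show ?thesis
    by (simp only:)
qed

lemma width_shift: "width (shift v ` A) = width A"
proof -
  have "(\<lambda>x. x 0) ` shift v ` A = (\<lambda>a. a + v 0) ` (\<lambda>x. x 0) ` A"
    by (auto simp: image_image)
  moreover have "card ((\<lambda>a. a + v 0) ` (\<lambda>x. x 0) ` A) = card ((\<lambda>x. x 0) ` A)"
    by (rule card_image) (simp add: inj_on_def)
  ultimately show ?thesis
    by (simp only: width_def)
qed

lemma lateral_area_shift: "lateral_area d (shift v ` A) = lateral_area d A"
  by (simp add: lateral_area_def card_projection_shift)

lemma box_shift:
  assumes "v \<in> cells d"
  shows "shift v ` box d a lo hi = box d (a + v 0) (shift v lo) (shift v hi)"
proof
  show "shift v ` box d a lo hi \<subseteq> box d (a + v 0) (shift v lo) (shift v hi)"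
    using assms by (auto simp: box_def shift_in_cells)
  show "box d (a + v 0) (shift v lo) (shift v hi) \<subseteq> shift v ` box d a lo hi"
  proof
    fix x assume "x \<in> box d (a + v 0) (shift v lo) (shift v hi)"
    then have "shift (- v) x \<in> box d a lo hi"
      using assms by (auto simp: box_def cells_def)
    then show "x \<in> shift v ` box d a lo hi"
      by (rule rev_image_eqI) simp
  qed
qed

lemma directed_plateau_shift:
  assumes "directed_plateau d A" "v \<in> cells d"
  shows "directed_plateau d (shift v ` A)"
proof -
  have A: "polyhypercube d A" "directed d A" "\<forall>a\<in>(\<lambda>x. x 0) ` A. plateau d a (stratum A a)"
    using assms(1) by (auto simp: directed_plateau_def)
  have directed: "directed d (shift v ` A)"
    using A(2) by (rule directed_shift)
  have "polyhypercube d (shift v ` A)"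
    using A(1) directed_imp_connected[OF directed] assms(2)
    by (auto simp: polyhypercube_def shift_in_cells)
  moreover have "plateau d (x 0 + v 0) (stratum (shift v ` A) (x 0 + v 0))" if "x \<in> A" for x
  proof -
    have "plateau d (x 0) (stratum A (x 0))"
      using A(3) that by blast
    then obtain lo hi where "stratum A (x 0) = box d (x 0) lo hi"
      by (auto simp: plateau_iff_box)
    then show ?thesis
      using box_shift[OF assms(2)] by (auto simp: stratum_shift plateau_iff_box)
  qed
  ultimately show ?thesis
    using directed by (auto simp: directed_plateau_def)
qed

section \<open>Normalised representatives\<close>

lemma reachable_in_last_step:
  assumes "reachable_in d A r c" "c \<noteq> r"
  obtains p where "p \<in> A" "elem_step d p c"
  using assms by (cases rule: rtranclp.cases) auto

lemma reachable_in_le: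
  assumes "reachable_in d A x y"
  shows "x i \<le> y i"
  using assms by induction (auto simp: elem_step_def unitv_def)

lemma directed_root_le:
  assumes "directed d A"
  obtains r where "r \<in> A" "\<forall>c\<in>A. reachable_in d A r c" "\<forall>c\<in>A. \<forall>i. r i \<le> c i"
proof -
  obtain r where r: "r \<in> A" "\<forall>c\<in>A. reachable_in d A r c"
    using assms by (auto simp: directed_def)
  moreover have "\<forall>c\<in>A. \<forall>i. r i \<le> c i"
    using r(2) reachable_in_le by blast
  ultimately show thesis
    using that by blast
qed

definition normalized :: "cell set \<Rightarrow> bool" where
  "normalized A \<longleftrightarrow> (\<lambda>_. 0) \<in> A \<and> (\<forall>x\<in>A. \<forall>i. 0 \<le> x i)"

lemma normalized_directed_reachable:
  assumes "normalized A" "directed d A" "c \<in> A"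
  shows "reachable_in d A (\<lambda>_. 0) c"
proof -
  obtain r where r: "r \<in> A" "\<forall>c\<in>A. reachable_in d A r c" "\<forall>c\<in>A. \<forall>i. r i \<le> c i"
    using assms(2) by (rule directed_root_le)
  have "r i = 0" for i
    using assms(1) r(1,3) by (metis normalized_def order_antisym)
  then have "r = (\<lambda>_. 0)"
    by auto
  then show ?thesis
    using r(2) assms(3) by blast
qed

lemma normalized_shift_eq:
  assumes "normalized A" "normalized (shift v ` A)"
  shows "shift v ` A = A"
proof -
  have "shift v (\<lambda>_. 0) \<in> shift v ` A"
    using assms(1) by (simp add: normalized_def)
  then have "0 \<le> shift v (\<lambda>_. 0) i" for i
    using assms(2) unfolding normalized_def by blast
  then have v_nonneg: "0 \<le> v i" for i
    by simp
  obtain a where a: "a \<in> A" "shift v a = (\<lambda>_. 0)"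
    using assms(2) by (auto simp: normalized_def)
  have "v i = 0" for i
  proof -
    have "0 \<le> a i"
      using assms(1) a(1) by (simp add: normalized_def)
    moreover have "a i + v i = 0"
      using fun_cong[OF a(2), of i] by simp
    ultimately show ?thesis
      using v_nonneg[of i] by linarith
  qed
  then have "v = (\<lambda>_. 0)"
    by auto
  then show ?thesis
    by simp
qed

lemma directed_obtain_normalizing_shift:
  assumes "directed d A" "A \<subseteq> cells d"
  obtains v where "v \<in> cells d" "normalized (shift v ` A)"
proof -
  obtain r where r: "r \<in> A" "\<forall>c\<in>A. \<forall>i. r i \<le> c i"
    using assms(1) directed_root_le by metis
  have "- r \<in> cells d"
    using r(1) assms(2) uminus_in_cells by blast
  moreover have "normalized (shift (- r) ` A)"
    using r by (force simp: normalized_def)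
  ultimately show thesis
    by (rule that)
qed

lemma card_quotient_transl_rel:
  assumes shift_closed: "\<And>A v. A \<in> S \<Longrightarrow> v \<in> cells d \<Longrightarrow> shift v ` A \<in> S"
    and directed: "\<And>A. A \<in> S \<Longrightarrow> directed d A \<and> A \<subseteq> cells d"
  shows "card (S // transl_rel d) = card {A\<in>S. normalized A}"
proof -
  let ?r = "transl_rel d"
  have "bij_betw (\<lambda>A. ?r``{A}) {A\<in>S. normalized A} (S // ?r)"
  proof (rule bij_betw_imageI)
    show "inj_on (\<lambda>A. ?r``{A}) {A\<in>S. normalized A}"
    proof (rule inj_onI)
      fix A B assume A: "A \<in> {A\<in>S. normalized A}" and B: "B \<in> {A\<in>S. normalized A}"
        and "?r``{A} = ?r``{B}"
      then have "(A, B) \<in> ?r"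
        using eq_equiv_class[OF _ equiv_transl_rel] by blast
      then obtain v where "B = shift v ` A"
        by (auto simp: transl_rel_eq)
      then show "A = B"
        using normalized_shift_eq[of A v] A B by simp
    qed
    show "(\<lambda>A. ?r``{A}) ` {A\<in>S. normalized A} = S // ?r"
    proof
      show "(\<lambda>A. ?r``{A}) ` {A\<in>S. normalized A} \<subseteq> S // ?r"
        by (auto simp: quotient_def)
      show "S // ?r \<subseteq> (\<lambda>A. ?r``{A}) ` {A\<in>S. normalized A}"
      proof
        fix X assume "X \<in> S // ?r"
        then obtain A where A: "A \<in> S" "X = ?r``{A}"
          by (auto simp: quotient_def)
        obtain v where v: "v \<in> cells d" "normalized (shift v ` A)"
          using directed[OF A(1)] by (blast elim: directed_obtain_normalizing_shift)
        then have "shift v ` A \<in> S"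
          using shift_closed[OF A(1)] by blast
        moreover have "(A, shift v ` A) \<in> ?r"
          using v(1) by (auto simp: transl_rel_eq)
        then have "X = ?r``{shift v ` A}"
          using A(2) equiv_class_eq[OF equiv_transl_rel] by simp
        ultimately show "X \<in> (\<lambda>A. ?r``{A}) ` {A\<in>S. normalized A}"
          using v(2) by blast
      qed
    qed
  qed
  then show ?thesis
    by (rule bij_betw_same_card[symmetric])
qed

definition layer_point :: "nat \<Rightarrow> int \<Rightarrow> cell \<Rightarrow> cell" where
  "layer_point d a f = (\<lambda>i. if i = 0 then a else if i < d then f i else 0)"

lemma layer_point_in_box:
  assumes "1 \<le> d"
  shows "layer_point d a f \<in> box d b lo hi \<longleftrightarrow> a = b \<and> (\<forall>l\<in>{1..<d}. lo l \<le> f l \<and> f l \<le> hi l)"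
  using assms by (auto simp: box_def layer_point_def cells_def)

lemma finite_box: "finite (box d a lo hi)"
proof -
  let ?extend = "\<lambda>g i. if i < d then g i else 0"
  let ?ranges = "\<lambda>i. if i = 0 then {a} else {lo i..hi i}"
  have "box d a lo hi \<subseteq> ?extend ` PiE {..<d} ?ranges"
  proof
    fix x assume x: "x \<in> box d a lo hi"
    then have "x = ?extend (restrict x {..<d})"
      by (auto simp: box_def cells_def fun_eq_iff)
    moreover have "restrict x {..<d} \<in> PiE {..<d} ?ranges"
      using x by (auto simp: box_def)
    ultimately show "x \<in> ?extend ` PiE {..<d} ?ranges"
      by blast
  qed
  moreover have "finite (PiE {..<d} ?ranges)"
    by (rule finite_PiE) auto
  ultimately show ?thesis
    by (meson finite_imageI finite_subset)
qed

lemma box_interval: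
  assumes "p \<in> box d a lo hi" "x \<in> box d a lo hi" "y \<in> cells d" "\<forall>i. p i \<le> y i \<and> y i \<le> x i"
  shows "y \<in> box d a lo hi"
proof -
  have "p 0 \<le> y 0" "y 0 \<le> x 0"
    using assms(4) by auto
  then have "y 0 = a"
    using assms(1,2) by (simp add: box_def)
  moreover have "lo l \<le> y l \<and> y l \<le> hi l" if "l \<in> {1..<d}" for l
  proof -
    have "lo l \<le> p l" "x l \<le> hi l"
      using assms(1,2) that by (auto simp: box_def)
    moreover have "p l \<le> y l" "y l \<le> x l"
      using assms(4) by auto
    ultimately show ?thesis
      by linarith
  qed
  ultimately show ?thesis
    using assms(3) by (simp add: box_def)
qed

definition step_distance :: "nat \<Rightarrow> cell \<Rightarrow> cell \<Rightarrow> nat" where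
  "step_distance d p b = (\<Sum>i<d. nat (b i - p i))"

lemma step_distance_eq_0_imp_eq:
  assumes "p \<in> cells d" "b \<in> cells d" "\<forall>i. p i \<le> b i" "step_distance d p b = 0"
  shows "p = b"
proof
  fix i
  show "p i = b i"
  proof (cases "i < d")
    case True
    then have "nat (b i - p i) = 0"
      using assms(4) by (simp add: step_distance_def)
    then show ?thesis
      using spec[OF assms(3), of i] by linarith
  next
    case False
    then show ?thesis
      using assms(1,2) by (simp add: cells_def)
  qed
qed

lemma step_distance_pos:
  assumes "0 < step_distance d p b"
  shows "\<exists>j<d. p j < b j"
proof (rule ccontr)
  assume "\<not> (\<exists>j<d. p j < b j)"
  then have "\<forall>i\<in>{..<d}. nat (b i - p i) = 0"
    by auto
  then show False
    using assms by (simp add: step_distance_def)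
qed

lemma step_distance_unit_step:
  assumes "j < d" "p j < b j"
  shows "step_distance d p b = Suc (step_distance d (\<lambda>i. p i + unitv j i) b)"
proof -
  have "step_distance d p b = (\<Sum>i<d. nat (b i - (p i + unitv j i)) + (if i = j then 1 else 0))"
    unfolding step_distance_def using assms(2) by (intro sum.cong) (auto simp: unitv_def)
  also have "\<dots> = step_distance d (\<lambda>i. p i + unitv j i) b + 1"
    using assms(1) by (simp add: sum.distrib step_distance_def)
  finally show ?thesis
    by simp
qed

lemma reachable_in_interval:
  assumes "a \<in> cells d" "b \<in> cells d" "\<forall>i. a i \<le> b i"
    and interval: "\<And>y. y \<in> cells d \<Longrightarrow> \<forall>i. a i \<le> y i \<and> y i \<le> b i \<Longrightarrow> y \<in> A"
  shows "reachable_in d A a b"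
proof -
  have "reachable_in d A p b"
    if "step_distance d p b = n" "p \<in> cells d" "\<forall>i. a i \<le> p i \<and> p i \<le> b i" for n p
    using that
  proof (induction n arbitrary: p)
    case 0
    have "p = b"
      using 0 by (intro step_distance_eq_0_imp_eq[OF _ assms(2)]) auto
    then show ?case
      by simp
  next
    case (Suc n)
    obtain j where j: "j < d" "p j < b j"
      using step_distance_pos[of d p b] Suc.prems(1) by auto
    define p' where "p' = (\<lambda>i. p i + unitv j i)"
    have "a i \<le> p' i \<and> p' i \<le> b i" for i
      using spec[OF Suc.prems(3), of i] j(2) by (auto simp: p'_def unitv_def)
    moreover have "p' \<in> cells d"
      using Suc.prems(2) j(1) by (simp add: p'_def unitv_def cells_def)
    moreover have "step_distance d p' b = n"
      using Suc.prems(1) step_distance_unit_step[of j d p b] j by (simp add: p'_def)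
    ultimately have "reachable_in d A p' b" "p \<in> A" "p' \<in> A"
      using Suc.IH interval Suc.prems(2,3) by auto
    moreover have "elem_step d p p'"
      unfolding p'_def elem_step_def using j(1) by blast
    ultimately show ?case
      by (metis (mono_tags, lifting) converse_rtranclp_into_rtranclp)
  qed
  then show ?thesis
    using assms(1,3) by blast
qed

lemma reachable_in_box_from_corner:
  assumes "1 \<le> d" "box d a lo hi \<subseteq> A" "x \<in> box d a lo hi"
  shows "reachable_in d A (layer_point d a lo) x"
proof -
  have "\<forall>l\<in>{1..<d}. lo l \<le> hi l"
    using assms(3) by (force simp: box_def)
  then have corner: "layer_point d a lo \<in> box d a lo hi"
    by (simp add: layer_point_in_box[OF assms(1)])
  show ?thesis
  proof (rule reachable_in_interval)
    show "layer_point d a lo \<in> cells d" "x \<in> cells d"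
      using corner assms(3) by (auto simp: box_def)
    show "\<forall>i. layer_point d a lo i \<le> x i"
      using assms(3) by (auto simp: layer_point_def box_def cells_def)
    show "y \<in> A" if "y \<in> cells d" "\<forall>i. layer_point d a lo i \<le> y i \<and> y i \<le> x i" for y
      using box_interval[OF corner assms(3) that] assms(2) by blast
  qed
qed

section \<open>Stacks of boxes\<close>

definition box_stack :: "nat \<Rightarrow> nat \<Rightarrow> layer_bounds \<Rightarrow> layer_bounds \<Rightarrow> cell set" where
  "box_stack d k lo hi = (\<Union>j<k. box d (int j) (lo j) (hi j))"

lemma box_stack_subset_cells: "box_stack d k lo hi \<subseteq> cells d"
  by (auto simp: box_stack_def box_def)

lemma finite_box_stack: "finite (box_stack d k lo hi)"
  by (simp add: box_stack_def finite_box)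

lemma stratum_box_stack:
  "j < k \<Longrightarrow> stratum (box_stack d k lo hi) (int j) = box d (int j) (lo j) (hi j)"
  by (auto simp: box_stack_def stratum_def box_def)

lemma layer_point_in_box_stack:
  assumes "1 \<le> d"
  shows "layer_point d (int j) f \<in> box_stack d k lo hi \<longleftrightarrow>
    j < k \<and> (\<forall>l\<in>{1..<d}. lo j l \<le> f l \<and> f l \<le> hi j l)"
  using assms by (auto simp: box_stack_def layer_point_in_box)

lemma box_stack_cong:
  assumes "\<forall>j<k. \<forall>l\<in>{1..<d}. lo j l = lo' j l \<and> hi j l = hi' j l"
  shows "box_stack d k lo hi = box_stack d k lo' hi'"
proof -
  have "box d (int j) (lo j) (hi j) = box d (int j) (lo' j) (hi' j)" if "j < k" for j
    using assms that unfolding box_def by force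
  then show ?thesis
    by (simp add: box_stack_def)
qed

lemma box_stack_subset_imp_bounds:
  assumes "1 \<le> d" "box_stack d k lo hi \<subseteq> box_stack d k lo' hi'"
    and "\<forall>l\<in>{1..<d}. lo j l \<le> hi j l" "j < k" "l \<in> {1..<d}"
  shows "lo' j l \<le> lo j l \<and> hi j l \<le> hi' j l"
proof -
  have "layer_point d (int j) (lo j) \<in> box_stack d k lo hi"
    "layer_point d (int j) (hi j) \<in> box_stack d k lo hi"
    using assms(3,4) by (simp_all add: layer_point_in_box_stack[OF assms(1)])
  then have "layer_point d (int j) (lo j) \<in> box_stack d k lo' hi'"
    "layer_point d (int j) (hi j) \<in> box_stack d k lo' hi'"
    using assms(2) by blast+
  then show ?thesis
    using assms(5) by (auto simp: layer_point_in_box_stack[OF assms(1)])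
qed

lemma layers_box_stack:
  assumes "1 \<le> d" "\<forall>j<k. \<forall>l\<in>{1..<d}. lo j l \<le> hi j l"
  shows "(\<lambda>x. x 0) ` box_stack d k lo hi = int ` {..<k}"
proof
  show "(\<lambda>x. x 0) ` box_stack d k lo hi \<subseteq> int ` {..<k}"
    by (auto simp: box_stack_def box_def)
  show "int ` {..<k} \<subseteq> (\<lambda>x. x 0) ` box_stack d k lo hi"
  proof
    fix a assume "a \<in> int ` {..<k}"
    then obtain j where j: "j < k" "a = int j"
      by auto
    then have "layer_point d (int j) (lo j) \<in> box_stack d k lo hi"
      using assms by (simp add: layer_point_in_box_stack)
    moreover have "layer_point d (int j) (lo j) 0 = a"
      using j by (simp add: layer_point_def)
    ultimately show "a \<in> (\<lambda>x. x 0) ` box_stack d k lo hi"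
      by force
  qed
qed

lemma width_box_stack:
  "1 \<le> d \<Longrightarrow> \<forall>j<k. \<forall>l\<in>{1..<d}. lo j l \<le> hi j l \<Longrightarrow> width (box_stack d k lo hi) = k"
  by (simp add: width_def layers_box_stack card_image)

lemma projection_box_stack:
  assumes "1 \<le> d" "l \<in> {1..<d}" "\<forall>j<k. \<forall>l\<in>{1..<d}. lo j l \<le> hi j l"
  shows "(\<lambda>x. (x 0, x l)) ` box_stack d k lo hi = (\<Union>j<k. {int j} \<times> {lo j l..hi j l})"
proof
  show "(\<lambda>x. (x 0, x l)) ` box_stack d k lo hi \<subseteq> (\<Union>j<k. {int j} \<times> {lo j l..hi j l})"
    using assms(2) by (auto simp: box_stack_def box_def)
  show "(\<Union>j<k. {int j} \<times> {lo j l..hi j l}) \<subseteq> (\<lambda>x. (x 0, x l)) ` box_stack d k lo hi"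
  proof
    fix q assume "q \<in> (\<Union>j<k. {int j} \<times> {lo j l..hi j l})"
    then obtain j c where jc: "j < k" "q = (int j, c)" "lo j l \<le> c" "c \<le> hi j l"
      by auto
    let ?y = "layer_point d (int j) ((lo j)(l := c))"
    have "?y \<in> box_stack d k lo hi"
      using assms jc by (simp add: layer_point_in_box_stack)
    moreover have "(?y 0, ?y l) = q"
      using assms(2) jc by (simp add: layer_point_def)
    ultimately show "q \<in> (\<lambda>x. (x 0, x l)) ` box_stack d k lo hi"
      by force
  qed
qed

lemma lateral_area_box_stack:
  assumes "1 \<le> d" "\<forall>j<k. \<forall>l\<in>{1..<d}. lo j l \<le> hi j l"
  shows "lateral_area d (box_stack d k lo hi) = (\<Sum>l\<in>{1..<d}. \<Sum>j<k. nat (hi j l - lo j l + 1))"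
proof -
  have "card ((\<lambda>x. (x 0, x l)) ` box_stack d k lo hi) = (\<Sum>j<k. nat (hi j l - lo j l + 1))"
    if "l \<in> {1..<d}" for l
  proof -
    have "card (\<Union>j<k. {int j} \<times> {lo j l..hi j l}) = (\<Sum>j<k. card ({int j} \<times> {lo j l..hi j l}))"
      by (rule card_UN_disjoint) auto
    then show ?thesis
      using projection_box_stack[OF assms(1) that assms(2)] by (simp add: card_cartesian_product)
  qed
  then show ?thesis
    by (simp add: lateral_area_def)
qed

definition admissible_bounds :: "nat \<Rightarrow> nat \<Rightarrow> layer_bounds \<Rightarrow> layer_bounds \<Rightarrow> bool" where
  "admissible_bounds d k lo hi \<longleftrightarrow> (\<forall>l\<in>{1..<d}. lo 0 l = 0 \<and> (\<forall>j<k. lo j l \<le> hi j l) \<and>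
     (\<forall>j. Suc j < k \<longrightarrow> lo j l \<le> lo (Suc j) l \<and> lo (Suc j) l \<le> hi j l))"

lemma admissible_boundsD:
  assumes "admissible_bounds d k lo hi" "l \<in> {1..<d}"
  shows "lo 0 l = 0" "j < k \<Longrightarrow> lo j l \<le> hi j l"
    "Suc j < k \<Longrightarrow> lo j l \<le> lo (Suc j) l" "Suc j < k \<Longrightarrow> lo (Suc j) l \<le> hi j l"
  using assms by (simp_all add: admissible_bounds_def)

lemma admissible_bounds_nonempty:
  "admissible_bounds d k lo hi \<Longrightarrow> \<forall>j<k. \<forall>l\<in>{1..<d}. lo j l \<le> hi j l"
  by (simp add: admissible_bounds_def)

lemma admissible_bounds_lo_nonneg:
  assumes "admissible_bounds d k lo hi" "j < k" "l \<in> {1..<d}"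
  shows "0 \<le> lo j l"
  using assms(2)
proof (induction j)
  case 0
  then show ?case
    using admissible_boundsD(1)[OF assms(1,3)] by simp
next
  case (Suc j)
  then show ?case
    using admissible_boundsD(3)[OF assms(1,3), of j] by simp
qed

lemma admissible_bounds_corner_0:
  "admissible_bounds d k lo hi \<Longrightarrow> layer_point d (int 0) (lo 0) = (\<lambda>_. 0)"
  using admissible_boundsD(1) by (auto simp: layer_point_def fun_eq_iff)

lemma normalized_box_stack:
  assumes "1 \<le> d" "1 \<le> k" "admissible_bounds d k lo hi"
  shows "normalized (box_stack d k lo hi)"
proof -
  have "layer_point d (int 0) (lo 0) = (\<lambda>_. 0)"
    using assms(3) by (rule admissible_bounds_corner_0)
  moreover have "layer_point d (int 0) (lo 0) \<in> box_stack d k lo hi"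
    using assms(2) admissible_boundsD(2)[OF assms(3), of _ 0] layer_point_in_box_stack[OF assms(1), of 0]
    by simp
  moreover have "0 \<le> x i" if x: "x \<in> box_stack d k lo hi" for x i
  proof -
    obtain j where j: "j < k" "x \<in> box d (int j) (lo j) (hi j)"
      using x by (auto simp: box_stack_def)
    show ?thesis
    proof (cases "i \<in> {1..<d}")
      case True
      then have "lo j i \<le> x i"
        using j(2) by (simp add: box_def)
      then show ?thesis
        using admissible_bounds_lo_nonneg[OF assms(3) j(1) True] by linarith
    next
      case False
      have "x \<in> cells d" "x 0 = int j"
        using j(2) by (simp_all add: box_def)
      then show ?thesis
        using False by (cases "i = 0") (simp_all add: cells_def)
    qed
  qed
  ultimately show ?thesis
    by (auto simp: normalized_def)
qed

lemma reachable_in_box_stack_corner: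
  assumes "1 \<le> d" "admissible_bounds d k lo hi" "j < k"
  shows "reachable_in d (box_stack d k lo hi) (\<lambda>_. 0) (layer_point d (int j) (lo j))"
  using assms(3)
proof (induction j)
  case 0
  then show ?case
    using admissible_bounds_corner_0[OF assms(2)] by simp
next
  case (Suc j)
  let ?A = "box_stack d k lo hi"
  let ?below = "layer_point d (int j) (lo (Suc j))"
  let ?corner = "layer_point d (int (Suc j)) (lo (Suc j))"
  have j: "j < k"
    using Suc.prems by simp
  have below_in: "?below \<in> box d (int j) (lo j) (hi j)"
    using admissible_boundsD(3,4)[OF assms(2) _ Suc.prems] by (simp add: layer_point_in_box[OF assms(1)])
  moreover have "box d (int j) (lo j) (hi j) \<subseteq> ?A"
    using j by (auto simp: box_stack_def)
  ultimately have "reachable_in d ?A (\<lambda>_. 0) ?below" "?below \<in> ?A"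
    using Suc.IH[OF j] reachable_in_box_from_corner[OF assms(1)] by (blast intro: rtranclp_trans)+
  moreover have "elem_step d ?below ?corner"
    unfolding elem_step_def using assms(1)
    by (intro exI[of _ 0]) (auto simp: layer_point_def unitv_def fun_eq_iff)
  moreover have "?corner \<in> ?A"
    using Suc.prems admissible_boundsD(2)[OF assms(2)] layer_point_in_box_stack[OF assms(1), of "Suc j"]
    by simp
  ultimately show ?case
    using rtranclp.rtrancl_into_rtrancl[of _ "\<lambda>_. 0" ?below ?corner] by simp
qed

lemma directed_box_stack:
  assumes "1 \<le> d" "1 \<le> k" "admissible_bounds d k lo hi"
  shows "directed d (box_stack d k lo hi)"
proof -
  let ?A = "box_stack d k lo hi"
  have "reachable_in d ?A (\<lambda>_. 0) x" if x: "x \<in> ?A" for x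
  proof -
    obtain j where j: "j < k" "x \<in> box d (int j) (lo j) (hi j)"
      using x by (auto simp: box_stack_def)
    moreover have "box d (int j) (lo j) (hi j) \<subseteq> ?A"
      using j(1) by (auto simp: box_stack_def)
    ultimately show ?thesis
      using reachable_in_box_stack_corner[OF assms(1,3) j(1)] reachable_in_box_from_corner[OF assms(1)]
      by (blast intro: rtranclp_trans)
  qed
  moreover have "(\<lambda>_. 0) \<in> ?A"
    using normalized_box_stack[OF assms] by (simp add: normalized_def)
  ultimately show ?thesis
    unfolding directed_def by blast
qed

lemma directed_plateau_box_stack:
  assumes "1 \<le> d" "1 \<le> k" "admissible_bounds d k lo hi"
  shows "directed_plateau d (box_stack d k lo hi)"
proof -
  let ?A = "box_stack d k lo hi"
  have directed: "directed d ?A"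
    using assms by (rule directed_box_stack)
  have "?A \<noteq> {}"
    using normalized_box_stack[OF assms] by (auto simp: normalized_def)
  then have "polyhypercube d ?A"
    using finite_box_stack box_stack_subset_cells directed_imp_connected[OF directed]
    by (auto simp: polyhypercube_def)
  moreover have "plateau d a (stratum ?A a)" if a: "a \<in> (\<lambda>x. x 0) ` ?A" for a
  proof -
    obtain j where "j < k" "a = int j"
      using a layers_box_stack[OF assms(1) admissible_bounds_nonempty[OF assms(3)]] by auto
    then show ?thesis
      by (auto simp: stratum_box_stack plateau_iff_box)
  qed
  ultimately show ?thesis
    using directed by (simp add: directed_plateau_def)
qed

lemma reachable_in_layers_between:
  assumes "reachable_in d A r x" "r \<in> A" "r 0 \<le> b" "b \<le> x 0"
  shows "b \<in> (\<lambda>x. x 0) ` A"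
  using assms(1,3,4)
proof (induction arbitrary: b rule: rtranclp_induct)
  case base
  then show ?case
    using assms(2) by (auto intro: rev_image_eqI)
next
  case (step y z)
  have "z 0 \<le> y 0 + 1"
    using step.hyps(2) by (auto simp: elem_step_def unitv_def)
  show ?case
  proof (cases "b \<le> y 0")
    case True
    then show ?thesis
      using step.IH step.prems(1) by blast
  next
    case False
    then have "b = z 0"
      using \<open>z 0 \<le> y 0 + 1\<close> step.prems(2) by linarith
    then show ?thesis
      using step.hyps(2) by (blast intro: rev_image_eqI)
  qed
qed

lemma layers_normalized_directed:
  assumes "finite A" "normalized A" "directed d A"
  shows "(\<lambda>x. x 0) ` A = int ` {..<width A}"
proof -
  let ?layers = "(\<lambda>x. x 0) ` A"
  have down_closed: "b \<in> ?layers" if "x \<in> A" "0 \<le> b" "b \<le> x 0" for x b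
    using reachable_in_layers_between[OF normalized_directed_reachable[OF assms(2,3) that(1)]] that(2,3)
      assms(2) by (simp add: normalized_def)
  have "?layers \<noteq> {}"
    using assms(2) by (auto simp: normalized_def)
  then have max_in: "Max ?layers \<in> ?layers"
    using assms(1) by simp
  have "?layers = {0..Max ?layers}"
  proof
    show "?layers \<subseteq> {0..Max ?layers}"
      using assms(1,2) by (auto simp: normalized_def)
    show "{0..Max ?layers} \<subseteq> ?layers"
      using max_in down_closed by auto
  qed
  moreover have "0 \<le> Max ?layers"
    using max_in assms(2) by (auto simp: normalized_def)
  moreover have "{0..m} = {0..<m + 1}" for m :: int
    by auto
  ultimately have "?layers = int ` {..<nat (Max ?layers + 1)}"
    by (simp add: image_atLeastZeroLessThan_int)
  then obtain m where layers: "?layers = int ` {..<m}"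
    by blast
  then have "width A = m"
    unfolding width_def by (simp add: card_image)
  with layers show ?thesis
    by simp
qed

lemma UN_strata_eq:
  assumes "(\<lambda>x. x 0) ` A = int ` {..<k}"
  shows "A = (\<Union>j<k. stratum A (int j))"
proof
  show "A \<subseteq> (\<Union>j<k. stratum A (int j))"
  proof
    fix x assume x: "x \<in> A"
    then have "x 0 \<in> int ` {..<k}"
      using assms by blast
    then show "x \<in> (\<Union>j<k. stratum A (int j))"
      using x by (auto simp: stratum_def)
  qed
qed (auto simp: stratum_def)

lemma plateau_strata_imp_box_stack:
  assumes "(\<lambda>x. x 0) ` A = int ` {..<k}" "\<forall>a\<in>(\<lambda>x. x 0) ` A. plateau d a (stratum A a)"
  obtains lo hi where "\<forall>j<k. \<forall>l\<in>{1..<d}. lo j l \<le> hi j l" "A = box_stack d k lo hi"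
proof -
  have "\<forall>j. \<exists>b. j < k \<longrightarrow> stratum A (int j) = box d (int j) (fst b) (snd b)"
    using assms by (auto simp: plateau_iff_box)
  then obtain b where b: "\<And>j. j < k \<Longrightarrow> stratum A (int j) = box d (int j) (fst (b j)) (snd (b j))"
    by metis
  define lo where "lo j = fst (b j)" for j
  define hi where "hi j = snd (b j)" for j
  have strata: "stratum A (int j) = box d (int j) (lo j) (hi j)" if "j < k" for j
    using b[OF that] by (simp add: lo_def hi_def)
  have "A = (\<Union>j<k. stratum A (int j))"
    using assms(1) by (rule UN_strata_eq)
  also have "\<dots> = box_stack d k lo hi"
    unfolding box_stack_def by (rule SUP_cong) (simp_all add: strata)
  finally have "A = box_stack d k lo hi" .
  moreover have "lo j l \<le> hi j l" if j: "j < k" and l: "l \<in> {1..<d}" for j l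
  proof -
    have "int j \<in> (\<lambda>x. x 0) ` A"
      unfolding assms(1) using j by simp
    then obtain x where "x \<in> A" "x 0 = int j"
      by auto
    then have "x \<in> stratum A (int j)"
      by (simp add: stratum_def)
    then have "x \<in> box d (int j) (lo j) (hi j)"
      using strata[OF j] by simp
    then have "lo j l \<le> x l \<and> x l \<le> hi j l"
      using l unfolding box_def by blast
    then show ?thesis
      by linarith
  qed
  ultimately show thesis
    using that by blast
qed

lemma normalized_box_stack_lo_0:
  assumes "1 \<le> d" "\<forall>j<k. \<forall>l\<in>{1..<d}. lo j l \<le> hi j l"
    and "normalized (box_stack d k lo hi)" "l \<in> {1..<d}"
  shows "lo 0 l = 0"
proof -
  have "(\<lambda>_. 0) \<in> box d 0 (lo 0) (hi 0)" "0 < k"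
    using assms(3) by (auto simp: normalized_def box_stack_def box_def)
  then have "lo 0 l \<le> 0"
    using assms(4) by (simp add: box_def)
  moreover have "layer_point d (int 0) (lo 0) \<in> box_stack d k lo hi"
    using layer_point_in_box_stack[OF assms(1), of 0] \<open>0 < k\<close> assms(2) by simp
  then have "0 \<le> layer_point d (int 0) (lo 0) l"
    using assms(3) by (simp add: normalized_def)
  then have "0 \<le> lo 0 l"
    using assms(4) by (simp add: layer_point_def)
  ultimately show ?thesis
    by simp
qed

text \<open>The lower corner of stratum j + 1 is entered by an elementary step. Inside its own stratum
nothing lies below it, so the step comes from the cell beneath it, which must belong to
stratum j.\<close>

lemma directed_box_stack_lo_Suc_bounds:
  assumes "1 \<le> d" "\<forall>j<k. \<forall>l\<in>{1..<d}. lo j l \<le> hi j l"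
    and "normalized (box_stack d k lo hi)" "directed d (box_stack d k lo hi)"
    and j: "Suc j < k" and l: "l \<in> {1..<d}"
  shows "lo j l \<le> lo (Suc j) l \<and> lo (Suc j) l \<le> hi j l"
proof -
  let ?A = "box_stack d k lo hi"
  let ?c = "layer_point d (int (Suc j)) (lo (Suc j))"
  have "?c \<in> ?A"
    using layer_point_in_box_stack[OF assms(1), of "Suc j" "lo (Suc j)"] j assms(2) by simp
  then have "reachable_in d ?A (\<lambda>_. 0) ?c"
    using normalized_directed_reachable[OF assms(3,4)] by blast
  moreover have "?c \<noteq> (\<lambda>_. 0)"
    by (auto simp: layer_point_def fun_eq_iff)
  ultimately obtain p where p: "p \<in> ?A" "elem_step d p ?c"
    by (rule reachable_in_last_step)
  then obtain i where i: "i < d" "?c = (\<lambda>t. p t + unitv i t)"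
    by (auto simp: elem_step_def)
  have p_eq: "p t = ?c t - unitv i t" for t
    using fun_cong[OF i(2), of t] by simp
  show ?thesis
  proof (cases "i = 0")
    case True
    then have "p = layer_point d (int j) (lo (Suc j))"
      by (auto simp: fun_eq_iff p_eq layer_point_def unitv_def)
    then show ?thesis
      using p(1) l layer_point_in_box_stack[OF assms(1), of j "lo (Suc j)"] by simp
  next
    case False
    obtain j' where j': "p \<in> box d (int j') (lo j') (hi j')"
      using p(1) by (auto simp: box_stack_def)
    have "p 0 = int (Suc j)"
      using False by (simp add: p_eq layer_point_def unitv_def)
    then have "j' = Suc j"
      using j' by (simp add: box_def)
    then have "lo (Suc j) i \<le> p i"
      using j' False i(1) by (simp add: box_def)
    then show ?thesis
      using False i(1) by (simp add: p_eq layer_point_def unitv_def)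
  qed
qed

lemma admissible_bounds_if_directed:
  assumes "1 \<le> d" "\<forall>j<k. \<forall>l\<in>{1..<d}. lo j l \<le> hi j l"
    and "normalized (box_stack d k lo hi)" "directed d (box_stack d k lo hi)"
  shows "admissible_bounds d k lo hi"
  using assms normalized_box_stack_lo_0[OF assms(1-3)] directed_box_stack_lo_Suc_bounds[OF assms]
  by (simp add: admissible_bounds_def)

lemma directed_plateau_imp_box_stack:
  assumes "1 \<le> d" "directed_plateau d A" "normalized A" "width A = k"
  obtains lo hi where "admissible_bounds d k lo hi" "A = box_stack d k lo hi"
proof -
  have A: "finite A" "directed d A" "\<forall>a\<in>(\<lambda>x. x 0) ` A. plateau d a (stratum A a)"
    using assms(2) by (auto simp: directed_plateau_def polyhypercube_def)
  have "(\<lambda>x. x 0) ` A = int ` {..<k}"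
    using layers_normalized_directed[OF A(1) assms(3) A(2)] assms(4) by simp
  then obtain lo hi where bounds: "\<forall>j<k. \<forall>l\<in>{1..<d}. lo j l \<le> hi j l"
    and A_eq: "A = box_stack d k lo hi"
    using plateau_strata_imp_box_stack A(3) by blast
  have "admissible_bounds d k lo hi"
    using admissible_bounds_if_directed[OF assms(1) bounds] assms(3) A(2) unfolding A_eq .
  with A_eq show thesis
    using that by blast
qed

section \<open>Encoding by multisets\<close>

type_synonym slot = "nat \<times> nat \<times> bool"

text \<open>A multiset M of slots encodes the bounds of an admissible stack: the multiplicity of
(j, l, True) is the rise lo_(j+1,l) - lo_(j,l), that of (j, l, False) the overlap
hi_(j,l) - lo_(j+1,l), or hi_(k-1,l) - lo_(k-1,l) for the top stratum, which has no rise.\<close>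

definition slots :: "nat \<Rightarrow> nat \<Rightarrow> slot set" where
  "slots d k = {..<k} \<times> {1..<d} \<times> UNIV - {k - 1} \<times> {1..<d} \<times> {True}"

definition stack_lo :: "slot multiset \<Rightarrow> layer_bounds" where
  "stack_lo M j l = int (\<Sum>i<j. count M (i, l, True))"

definition stack_hi :: "slot multiset \<Rightarrow> layer_bounds" where
  "stack_hi M j l = stack_lo M j l + int (count M (j, l, True) + count M (j, l, False))"

lemma stack_lo_0 [simp]: "stack_lo M 0 l = 0"
  by (simp add: stack_lo_def)

lemma stack_lo_Suc: "stack_lo M (Suc j) l = stack_lo M j l + int (count M (j, l, True))"
  by (simp add: stack_lo_def)

lemma admissible_bounds_stack_lo_hi: "admissible_bounds d k (stack_lo M) (stack_hi M)"
  by (simp add: admissible_bounds_def stack_lo_Suc stack_hi_def)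

lemma finite_slots: "finite (slots d k)"
  by (simp add: slots_def)

lemma card_slots:
  assumes "1 \<le> k"
  shows "card (slots d k) = 2 * k * (d - 1) - (d - 1)"
proof -
  have "{k - 1} \<times> {1..<d} \<times> {True} \<subseteq> {..<k} \<times> {1..<d} \<times> (UNIV :: bool set)"
    using assms by auto
  then have "card (slots d k)
      = card ({..<k} \<times> {1..<d} \<times> (UNIV :: bool set)) - card ({k - 1} \<times> {1..<d} \<times> {True})"
    unfolding slots_def by (intro card_Diff_subset) auto
  then show ?thesis
    by (simp add: card_cartesian_product algebra_simps)
qed

lemma size_eq_sum_slot_counts:
  assumes "set_mset M \<subseteq> slots d k"
  shows "size M = (\<Sum>l\<in>{1..<d}. \<Sum>j<k. count M (j, l, True) + count M (j, l, False))"
proof -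
  have "size M = (\<Sum>x\<in>{..<k} \<times> {1..<d} \<times> (UNIV :: bool set). count M x)"
    unfolding size_multiset_overloaded_eq
    using assms by (intro sum.mono_neutral_left) (auto simp: slots_def not_in_iff)
  also have "\<dots> = (\<Sum>j<k. \<Sum>l\<in>{1..<d}. \<Sum>b\<in>UNIV. count M (j, l, b))"
    by (simp add: sum.cartesian_product case_prod_unfold)
  also have "\<dots> = (\<Sum>j<k. \<Sum>l\<in>{1..<d}. count M (j, l, True) + count M (j, l, False))"
    by (simp add: UNIV_bool add.commute)
  also have "\<dots> = (\<Sum>l\<in>{1..<d}. \<Sum>j<k. count M (j, l, True) + count M (j, l, False))"
    by (rule sum.swap)
  finally show ?thesis .
qed

lemma lateral_area_box_stack_lo_hi:
  assumes "1 \<le> d" "set_mset M \<subseteq> slots d k"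
  shows "lateral_area d (box_stack d k (stack_lo M) (stack_hi M)) = size M + k * (d - 1)"
proof -
  have "lateral_area d (box_stack d k (stack_lo M) (stack_hi M))
      = (\<Sum>l\<in>{1..<d}. \<Sum>j<k. nat (stack_hi M j l - stack_lo M j l + 1))"
    using lateral_area_box_stack[OF assms(1) admissible_bounds_nonempty[OF admissible_bounds_stack_lo_hi]] .
  also have "\<dots> = (\<Sum>l\<in>{1..<d}. \<Sum>j<k. count M (j, l, True) + count M (j, l, False) + 1)"
    by (simp add: stack_hi_def nat_add_distrib)
  also have "\<dots> = (\<Sum>l\<in>{1..<d}. (\<Sum>j<k. count M (j, l, True) + count M (j, l, False)) + k)"
    by (intro sum.cong refl) (simp only: sum.distrib, simp)
  also have "\<dots> = size M + k * (d - 1)"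
    by (simp only: sum.distrib size_eq_sum_slot_counts[OF assms(2)]) simp
  finally show ?thesis .
qed

lemma stack_lo_hi_inj:
  assumes "set_mset M \<subseteq> slots d k" "set_mset M' \<subseteq> slots d k"
    and "\<forall>j<k. \<forall>l\<in>{1..<d}. stack_lo M j l = stack_lo M' j l \<and> stack_hi M j l = stack_hi M' j l"
  shows "M = M'"
proof (rule multiset_eqI)
  have agree: "stack_lo M j l = stack_lo M' j l" "stack_hi M j l = stack_hi M' j l"
    if "j < k" "l \<in> {1..<d}" for j l
    using assms(3) that by blast+
  fix x :: slot
  obtain j l b where x: "x = (j, l, b)"
    by (cases x) auto
  show "count M x = count M' x"
  proof (cases "x \<in> slots d k")
    case False
    then show ?thesis
      using assms(1,2) by (metis count_eq_zero_iff subsetD)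
  next
    case True
    then have jl: "j < k" "l \<in> {1..<d}"
      using x by (auto simp: slots_def)
    have rise: "count M (j, l, True) = count M' (j, l, True)"
    proof (cases "Suc j < k")
      case True
      then show ?thesis
        using agree(1)[OF True jl(2)] agree(1)[OF jl] by (simp add: stack_lo_Suc)
    next
      case False
      then have "(j, l, True) \<notin> slots d k"
        by (auto simp: slots_def)
      then show ?thesis
        using assms(1,2) by (metis count_eq_zero_iff subsetD)
    qed
    moreover have "count M (j, l, False) = count M' (j, l, False)"
      using agree[OF jl] rise by (simp add: stack_hi_def)
    ultimately show ?thesis
      using x by (cases b) simp_all
  qed
qed

definition bounds_multiset :: "nat \<Rightarrow> nat \<Rightarrow> layer_bounds \<Rightarrow> layer_bounds \<Rightarrow> slot multiset" where
  "bounds_multiset d k lo hi = Abs_multiset (\<lambda>(j, l, b). if (j, l, b) \<in> slots d k then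
     (if b then nat (lo (Suc j) l - lo j l)
      else nat (hi j l - (if Suc j < k then lo (Suc j) l else lo j l))) else 0)"

lemma count_bounds_multiset:
  "count (bounds_multiset d k lo hi) (j, l, b) = (if (j, l, b) \<in> slots d k then
     (if b then nat (lo (Suc j) l - lo j l)
      else nat (hi j l - (if Suc j < k then lo (Suc j) l else lo j l))) else 0)"
proof -
  let ?c = "\<lambda>(j, l, b). if (j, l, b) \<in> slots d k then
     (if b then nat (lo (Suc j) l - lo j l)
      else nat (hi j l - (if Suc j < k then lo (Suc j) l else lo j l))) else (0 :: nat)"
  have "{x. 0 < ?c x} \<subseteq> slots d k"
    by (auto split: if_splits)
  then have "finite {x. 0 < ?c x}"
    using finite_slots by (rule finite_subset)
  then show ?thesis
    by (simp add: bounds_multiset_def)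
qed

lemma set_mset_bounds_multiset: "set_mset (bounds_multiset d k lo hi) \<subseteq> slots d k"
proof
  fix x assume "x \<in># bounds_multiset d k lo hi"
  moreover obtain j l b where "x = (j, l, b)"
    by (cases x) auto
  ultimately show "x \<in> slots d k"
    by (auto simp: count_bounds_multiset simp flip: count_greater_zero_iff split: if_splits)
qed

lemma stack_lo_bounds_multiset:
  assumes "admissible_bounds d k lo hi" "j < k" "l \<in> {1..<d}"
  shows "stack_lo (bounds_multiset d k lo hi) j l = lo j l"
  using assms(2)
proof (induction j)
  case 0
  then show ?case
    using admissible_boundsD(1)[OF assms(1,3)] by simp
next
  case (Suc j)
  then have "(j, l, True) \<in> slots d k"
    using assms(3) by (auto simp: slots_def)
  then show ?case
    using Suc admissible_boundsD(3)[OF assms(1,3) Suc.prems]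
    by (simp add: stack_lo_Suc count_bounds_multiset)
qed

lemma stack_hi_bounds_multiset:
  assumes "admissible_bounds d k lo hi" "j < k" "l \<in> {1..<d}"
  shows "stack_hi (bounds_multiset d k lo hi) j l = hi j l"
proof (cases "Suc j < k")
  case True
  then have "(j, l, True) \<in> slots d k" "(j, l, False) \<in> slots d k"
    using assms(3) by (auto simp: slots_def)
  then show ?thesis
    using True stack_lo_bounds_multiset[OF assms] admissible_boundsD(3,4)[OF assms(1,3) True]
    by (simp add: stack_hi_def count_bounds_multiset)
next
  case False
  then have "(j, l, True) \<notin> slots d k" "(j, l, False) \<in> slots d k"
    using assms(2,3) by (auto simp: slots_def)
  then show ?thesis
    using False stack_lo_bounds_multiset[OF assms] admissible_boundsD(2)[OF assms(1,3,2)]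
    by (simp add: stack_hi_def count_bounds_multiset)
qed

lemma directed_plateau_imp_stack_multiset:
  assumes "1 \<le> d" "directed_plateau d A" "normalized A" "width A = k"
  obtains M where "set_mset M \<subseteq> slots d k" "A = box_stack d k (stack_lo M) (stack_hi M)"
proof -
  obtain lo hi where bounds: "admissible_bounds d k lo hi" and A_eq: "A = box_stack d k lo hi"
    using directed_plateau_imp_box_stack[OF assms] .
  let ?M = "bounds_multiset d k lo hi"
  have "\<forall>j<k. \<forall>l\<in>{1..<d}. lo j l = stack_lo ?M j l \<and> hi j l = stack_hi ?M j l"
    using stack_lo_bounds_multiset[OF bounds] stack_hi_bounds_multiset[OF bounds] by simp
  then have "A = box_stack d k (stack_lo ?M) (stack_hi ?M)"
    unfolding A_eq by (rule box_stack_cong)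
  then show thesis
    by (rule that[OF set_mset_bounds_multiset])
qed

lemma box_stack_eq_imp_bounds_eq:
  assumes "1 \<le> d" "box_stack d k lo hi = box_stack d k lo' hi'"
    and "\<forall>j<k. \<forall>l\<in>{1..<d}. lo j l \<le> hi j l" "\<forall>j<k. \<forall>l\<in>{1..<d}. lo' j l \<le> hi' j l"
  shows "\<forall>j<k. \<forall>l\<in>{1..<d}. lo j l = lo' j l \<and> hi j l = hi' j l"
proof (intro allI impI ballI)
  fix j l assume "j < k" "l \<in> {1..<d}"
  then show "lo j l = lo' j l \<and> hi j l = hi' j l"
    using box_stack_subset_imp_bounds[OF assms(1) equalityD1[OF assms(2)]]
      box_stack_subset_imp_bounds[OF assms(1) equalityD2[OF assms(2)]] assms(3,4)
    by (meson order_antisym)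
qed

lemma inj_on_box_stack_multiset:
  assumes "1 \<le> d"
  shows "inj_on (\<lambda>M. box_stack d k (stack_lo M) (stack_hi M)) {M. set_mset M \<subseteq> slots d k}"
proof (rule inj_onI)
  fix M M' assume "M \<in> {M. set_mset M \<subseteq> slots d k}" "M' \<in> {M. set_mset M \<subseteq> slots d k}"
    and eq: "box_stack d k (stack_lo M) (stack_hi M) = box_stack d k (stack_lo M') (stack_hi M')"
  moreover have "\<forall>j<k. \<forall>l\<in>{1..<d}. stack_lo M j l = stack_lo M' j l \<and> stack_hi M j l = stack_hi M' j l"
    using box_stack_eq_imp_bounds_eq[OF assms eq admissible_bounds_nonempty admissible_bounds_nonempty]
      admissible_bounds_stack_lo_hi by blast
  ultimately show "M = M'"
    by (intro stack_lo_hi_inj) simp_all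
qed

lemma card_normalized_directed_plateau:
  assumes "1 \<le> d" "1 \<le> k"
  shows "card {A \<in> {A. directed_plateau d A \<and> width A = k \<and> lateral_area d A = n}. normalized A}
    = card {M. set_mset M \<subseteq> slots d k \<and> size M + k * (d - 1) = n}"
proof -
  let ?stack = "\<lambda>M. box_stack d k (stack_lo M) (stack_hi M)"
  let ?S = "{A \<in> {A. directed_plateau d A \<and> width A = k \<and> lateral_area d A = n}. normalized A}"
  let ?T = "{M. set_mset M \<subseteq> slots d k \<and> size M + k * (d - 1) = n}"
  have stack_in: "?stack M \<in> ?S \<longleftrightarrow> size M + k * (d - 1) = n" if "set_mset M \<subseteq> slots d k" for M
    using that width_box_stack[OF assms(1) admissible_bounds_nonempty[OF admissible_bounds_stack_lo_hi]]
    by (simp add: directed_plateau_box_stack[OF assms admissible_bounds_stack_lo_hi]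
        lateral_area_box_stack_lo_hi[OF assms(1)] normalized_box_stack[OF assms admissible_bounds_stack_lo_hi])
  have "?S \<subseteq> ?stack ` ?T"
  proof
    fix A assume A: "A \<in> ?S"
    then obtain M where M: "set_mset M \<subseteq> slots d k" and A_eq: "A = ?stack M"
      using directed_plateau_imp_stack_multiset[OF assms(1)] by auto
    then have "M \<in> ?T"
      using A stack_in[OF M] by simp
    then show "A \<in> ?stack ` ?T"
      unfolding A_eq by (rule imageI)
  qed
  moreover have "?stack ` ?T \<subseteq> ?S"
  proof
    fix A assume "A \<in> ?stack ` ?T"
    then obtain M where "M \<in> ?T" "A = ?stack M"
      by (rule imageE) simp
    then show "A \<in> ?S"
      using stack_in by simp
  qed
  moreover have "inj_on ?stack ?T"
    using inj_on_box_stack_multiset[OF assms(1)] by (rule inj_on_subset) blast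
  ultimately have "bij_betw ?stack ?T ?S"
    by (simp add: bij_betw_def subset_antisym)
  then show ?thesis
    by (rule bij_betw_same_card[symmetric])
qed

section \<open>The generating function\<close>

lemma p_count_eq_choose:
  assumes "1 \<le> d" "1 \<le> k"
  shows "p_count d k n = (if k * (d - 1) \<le> n
    then (card (slots d k) + (n - k * (d - 1)) - 1) choose (n - k * (d - 1)) else 0)"
proof -
  let ?S = "{A. directed_plateau d A \<and> width A = k \<and> lateral_area d A = n}"
  have "p_count d k n = card {A \<in> ?S. normalized A}"
    unfolding p_count_def
  proof (rule card_quotient_transl_rel)
    show "shift v ` A \<in> ?S" if "A \<in> ?S" "v \<in> cells d" for A v
      using that by (simp add: directed_plateau_shift width_shift lateral_area_shift)
    show "directed d A \<and> A \<subseteq> cells d" if "A \<in> ?S" for A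
      using that by (simp add: directed_plateau_def polyhypercube_def)
  qed
  also have "\<dots> = card {M. set_mset M \<subseteq> slots d k \<and> size M + k * (d - 1) = n}"
    using assms by (rule card_normalized_directed_plateau)
  also have "{M. set_mset M \<subseteq> slots d k \<and> size M + k * (d - 1) = n}
      = (if k * (d - 1) \<le> n then multisets_of_size (slots d k) (n - k * (d - 1)) else {})"
    by (auto simp: multisets_of_size_def)
  finally show ?thesis
    by (simp add: card_multisets_of_size finite_slots)
qed

lemma fps_X_power_div_one_minus_X_power_nth:
  assumes "0 < m"
  shows "(fps_X ^ a / (1 - fps_X) ^ m :: 'a :: field_char_0 fps) $ n
    = (if a \<le> n then of_nat ((m + (n - a) - 1) choose (n - a)) else 0)"
proof -
  have "inverse ((1 - fps_X) ^ m :: 'a fps) = Abs_fps (\<lambda>j. of_nat ((m + j - 1) choose j))"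
    using one_minus_const_fps_X_neg_power'[OF assms, of 1] by simp
  then have "fps_X ^ a / (1 - fps_X) ^ m = fps_X ^ a * Abs_fps (\<lambda>j. of_nat ((m + j - 1) choose j) :: 'a)"
    by (simp add: fps_divide_unit)
  then show ?thesis
    by (simp add: fps_X_power_mult_nth not_less)
qed

theorem proposition1:
  fixes d k :: nat
  assumes "d \<ge> 3" and "k \<ge> 1"
  shows "P_gf d k = fps_X ^ (k * (d - 1)) / (1 - fps_X) ^ (2 * k * (d - 1) - (d - 1))"
proof (rule fps_ext)
  fix n
  have "d - 1 \<le> k * (d - 1)"
    using assms(2) by simp
  then have "0 < k * (d - 1)" "0 < 2 * k * (d - 1) - (d - 1)"
    unfolding mult.assoc using assms(1) by linarith+
  then show "P_gf d k $ n = (fps_X ^ (k * (d - 1)) / (1 - fps_X) ^ (2 * k * (d - 1) - (d - 1))) $ n"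
    using p_count_eq_choose[of d k n] card_slots[OF assms(2)] assms
    by (auto simp: P_gf_def fps_X_power_div_one_minus_X_power_nth)
qed

end
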